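(* Let $f\in C^2(\mathbb{R}^d)$, $\gamma:\mathbb{R}_+\to\mathbb{R}_+$ continuous with $c\le\gamma(t)\le C$ ($0<c\le C$), $0<\beta<\frac{2c}{C^2}$, and let $x\in C^2([0,T[;\mathbb{R}^d)$ solve $\ddot x+\gamma(t)\dot x+\nabla f(x+\beta\dot x)=0$ on $[0,T[$. Define $V(t)=f(x(t)+\beta\dot x(t))+\frac12\|\dot x(t)\|^2$. Then for all $t\in[0,T[$, $$V'(t)\le-\delta_1\big(\|\dot x(t)\|^2+\|\nabla f(x(t)+\beta\dot x(t))\|^2\big),\qquad \delta_1=\min\Big(\frac c2,\ \beta\Big(1-\frac{\beta C^2}{2c}\Big)\Big)>0.$$ *)

theory Defs
  imports "HOL-Analysis.Analysis"
begin

end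

theory Submission
  imports Defs
begin

text \<open>Along a trajectory, with \<open>u = x'\<close> and \<open>w = \<nabla>f(x + \<beta>x')\<close>, the equation gives
  \<open>x'' = -\<gamma>u - w\<close>, so the chain rule yields
  \<open>V' = -\<gamma>\<parallel>u\<parallel>\<^sup>2 - \<beta>\<parallel>w\<parallel>\<^sup>2 - \<beta>\<gamma> (w\<bullet>u)\<close>. Young's inequality absorbs the cross term into
  half of the first term and a \<open>\<beta>\<^sup>2\<gamma>/2\<close> share of the second; the bounds \<open>c \<le> \<gamma> \<le> C\<close>
  then make both remaining coefficients at least \<open>\<delta>\<^sub>1\<close>, which is positive exactly
  because \<open>\<beta> < 2c/C\<^sup>2\<close>.\<close>

lemma energy_has_real_derivative:
  fixes f :: "'a::real_inner \<Rightarrow> real" and x x' :: "real \<Rightarrow> 'a"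
  assumes grad: "(f has_derivative (\<lambda>h. g \<bullet> h)) (at (x t + \<beta> *\<^sub>R x' t))"
    and dx: "(x has_vector_derivative x' t) (at t within S)"
    and ddx: "(x' has_vector_derivative v) (at t within S)"
  shows "((\<lambda>s. f (x s + \<beta> *\<^sub>R x' s) + (1/2) * (norm (x' s))\<^sup>2)
           has_real_derivative g \<bullet> (x' t + \<beta> *\<^sub>R v) + x' t \<bullet> v) (at t within S)"
proof -
  have "((\<lambda>s. x s + \<beta> *\<^sub>R x' s) has_vector_derivative x' t + \<beta> *\<^sub>R v) (at t within S)"
    using dx ddx by (auto intro!: derivative_eq_intros)
  from has_derivative_compose[OF this[unfolded has_vector_derivative_def] grad]
  have potential: "((\<lambda>s. f (x s + \<beta> *\<^sub>R x' s)) has_real_derivative g \<bullet> (x' t + \<beta> *\<^sub>R v))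
      (at t within S)"
    unfolding has_field_derivative_def
    by (rule has_derivative_eq_rhs) (auto simp: fun_eq_iff mult.commute)
  have "((\<lambda>s. x' s \<bullet> x' s) has_real_derivative 2 * (x' t \<bullet> v)) (at t within S)"
    using has_derivative_inner[OF ddx[unfolded has_vector_derivative_def]
        ddx[unfolded has_vector_derivative_def]]
    unfolding has_field_derivative_def
    by (rule has_derivative_eq_rhs) (auto simp: fun_eq_iff inner_commute algebra_simps)
  from DERIV_cmult[OF this, of "1/2"]
  have kinetic: "((\<lambda>s. (1/2) * (norm (x' s))\<^sup>2) has_real_derivative x' t \<bullet> v) (at t within S)"
    by (simp add: power2_norm_eq_inner)
  show ?thesis
    using DERIV_add[OF potential kinetic] by simp
qed

lemma damped_energy_dissipation:
  fixes u w :: "'a::real_inner"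
  assumes "0 \<le> \<gamma>" and "0 \<le> \<beta>"
  shows "w \<bullet> (u + \<beta> *\<^sub>R (- \<gamma> *\<^sub>R u - w)) + u \<bullet> (- \<gamma> *\<^sub>R u - w)
         \<le> - (\<gamma> / 2) * (norm u)\<^sup>2 - \<beta> * (1 - \<beta> * \<gamma> / 2) * (norm w)\<^sup>2"
proof -
  have "- (w \<bullet> u) \<le> norm w * norm u"
    using Cauchy_Schwarz_ineq2[of w u] by linarith
  from mult_left_mono[OF this mult_nonneg_nonneg[OF \<open>0 \<le> \<beta>\<close> \<open>0 \<le> \<gamma>\<close>]]
  have "- (\<beta> * \<gamma> * (w \<bullet> u)) \<le> \<beta> * \<gamma> * (norm w * norm u)"
    by simp
  also have "\<dots> \<le> \<gamma> / 2 * (norm u)\<^sup>2 + \<beta>\<^sup>2 * \<gamma> / 2 * (norm w)\<^sup>2"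
    using mult_nonneg_nonneg[OF \<open>0 \<le> \<gamma>\<close> zero_le_power2[of "norm u - \<beta> * norm w"]]
    by (simp add: power2_eq_square algebra_simps)
  finally have "- (\<beta> * \<gamma> * (w \<bullet> u)) \<le> \<gamma> / 2 * (norm u)\<^sup>2 + \<beta>\<^sup>2 * \<gamma> / 2 * (norm w)\<^sup>2" .
  moreover have "w \<bullet> (u + \<beta> *\<^sub>R (- \<gamma> *\<^sub>R u - w)) + u \<bullet> (- \<gamma> *\<^sub>R u - w)
      = - (\<beta> * \<gamma> * (w \<bullet> u)) - \<beta> * (norm w)\<^sup>2 - \<gamma> * (norm u)\<^sup>2"
    by (simp add: algebra_simps inner_commute power2_norm_eq_inner)
  ultimately show ?thesis
    by (simp add: algebra_simps power2_eq_square)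
qed

lemma damping_rate_pos:
  fixes c C \<beta> :: real
  assumes "0 < c" and "c \<le> C" and "0 < \<beta>" and "\<beta> < 2 * c / C\<^sup>2"
  shows "min (c / 2) (\<beta> * (1 - \<beta> * C\<^sup>2 / (2 * c))) > 0"
  using assms by (auto simp: field_simps)

lemma damping_rate_le:
  fixes c C \<beta> \<gamma> :: real
  assumes "0 < c" and "c \<le> \<gamma>" and "\<gamma> \<le> C" and "0 < \<beta>"
  shows "min (c / 2) (\<beta> * (1 - \<beta> * C\<^sup>2 / (2 * c))) \<le> \<gamma> / 2"
    and "min (c / 2) (\<beta> * (1 - \<beta> * C\<^sup>2 / (2 * c))) \<le> \<beta> * (1 - \<beta> * \<gamma> / 2)"
proof -
  show "min (c / 2) (\<beta> * (1 - \<beta> * C\<^sup>2 / (2 * c))) \<le> \<gamma> / 2"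
    using assms by simp
  have "\<gamma> * c \<le> C * C"
    using assms by (meson mult_mono order_trans less_imp_le)
  then have "\<beta> * \<gamma> / 2 \<le> \<beta> * C\<^sup>2 / (2 * c)"
    using assms by (simp add: field_simps power2_eq_square)
  then show "min (c / 2) (\<beta> * (1 - \<beta> * C\<^sup>2 / (2 * c))) \<le> \<beta> * (1 - \<beta> * \<gamma> / 2)"
    using assms by (simp add: min.coboundedI2 mult_left_mono)
qed

theorem mainTheorem11:
  fixes f :: "'a::euclidean_space \<Rightarrow> real"
    and g :: "'a \<Rightarrow> 'a"
    and G' :: "'a \<Rightarrow> 'a \<Rightarrow>\<^sub>L 'a"
    and \<gamma> :: "real \<Rightarrow> real"
    and c C \<beta> :: real
    and T :: ereal
    and x x' x'' :: "real \<Rightarrow> 'a"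
  assumes grad: "\<And>y. (f has_derivative (\<lambda>h. g y \<bullet> h)) (at y)"
    and hess: "\<And>y. (g has_derivative blinfun_apply (G' y)) (at y)"
    and hess_cont: "continuous_on UNIV G'"
    and gamma_cont: "continuous_on {0..} \<gamma>"
    and gamma_bounds: "\<And>t. t \<ge> 0 \<Longrightarrow> c \<le> \<gamma> t \<and> \<gamma> t \<le> C"
    and c_pos: "0 < c" and cC: "c \<le> C"
    and beta_pos: "0 < \<beta>" and beta_bound: "\<beta> < 2 * c / C\<^sup>2"
    and T_pos: "T > 0"
    and dx: "\<And>t. t \<in> {s. 0 \<le> s \<and> ereal s < T} \<Longrightarrow>
               (x has_vector_derivative x' t) (at t within {s. 0 \<le> s \<and> ereal s < T})"
    and ddx: "\<And>t. t \<in> {s. 0 \<le> s \<and> ereal s < T} \<Longrightarrow>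
               (x' has_vector_derivative x'' t) (at t within {s. 0 \<le> s \<and> ereal s < T})"
    and ddx_cont: "continuous_on {s. 0 \<le> s \<and> ereal s < T} x''"
    and ode: "\<And>t. t \<in> {s. 0 \<le> s \<and> ereal s < T} \<Longrightarrow>
               x'' t + \<gamma> t *\<^sub>R x' t + g (x t + \<beta> *\<^sub>R x' t) = 0"
  shows "min (c / 2) (\<beta> * (1 - \<beta> * C\<^sup>2 / (2 * c))) > 0 \<and>
    (\<forall>t \<in> {s. 0 \<le> s \<and> ereal s < T}. \<exists>D.
       ((\<lambda>s. f (x s + \<beta> *\<^sub>R x' s) + (1/2) * (norm (x' s))\<^sup>2)
          has_real_derivative D) (at t within {s. 0 \<le> s \<and> ereal s < T}) \<and>
       D \<le> - min (c / 2) (\<beta> * (1 - \<beta> * C\<^sup>2 / (2 * c))) *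
              ((norm (x' t))\<^sup>2 + (norm (g (x t + \<beta> *\<^sub>R x' t)))\<^sup>2))"
proof (intro conjI ballI)
  let ?\<delta> = "min (c / 2) (\<beta> * (1 - \<beta> * C\<^sup>2 / (2 * c)))"
  show "?\<delta> > 0"
    using damping_rate_pos c_pos cC beta_pos beta_bound .
  fix t assume t: "t \<in> {s. 0 \<le> s \<and> ereal s < T}"
  define u where "u = x' t"
  define w where "w = g (x t + \<beta> *\<^sub>R x' t)"
  have \<gamma>: "c \<le> \<gamma> t" "\<gamma> t \<le> C"
    using t gamma_bounds by auto
  have "x'' t = - \<gamma> t *\<^sub>R u - w"
    using ode[OF t] unfolding u_def w_def by (simp add: algebra_simps eq_neg_iff_add_eq_0)
  then have V': "((\<lambda>s. f (x s + \<beta> *\<^sub>R x' s) + (1/2) * (norm (x' s))\<^sup>2) has_real_derivative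
      w \<bullet> (u + \<beta> *\<^sub>R (- \<gamma> t *\<^sub>R u - w)) + u \<bullet> (- \<gamma> t *\<^sub>R u - w))
      (at t within {s. 0 \<le> s \<and> ereal s < T})"
    using energy_has_real_derivative[OF grad dx[OF t] ddx[OF t]] unfolding u_def w_def by simp
  have "?\<delta> * (norm u)\<^sup>2 \<le> \<gamma> t / 2 * (norm u)\<^sup>2"
    and "?\<delta> * (norm w)\<^sup>2 \<le> \<beta> * (1 - \<beta> * \<gamma> t / 2) * (norm w)\<^sup>2"
    by (intro mult_right_mono damping_rate_le[OF c_pos \<gamma> beta_pos] zero_le_power2)+
  then have "w \<bullet> (u + \<beta> *\<^sub>R (- \<gamma> t *\<^sub>R u - w)) + u \<bullet> (- \<gamma> t *\<^sub>R u - w)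
      \<le> - ?\<delta> * ((norm u)\<^sup>2 + (norm w)\<^sup>2)"
    using damped_energy_dissipation[of "\<gamma> t" \<beta> w u] \<gamma> c_pos beta_pos
    by (simp add: distrib_left)
  with V' show "\<exists>D. ((\<lambda>s. f (x s + \<beta> *\<^sub>R x' s) + (1/2) * (norm (x' s))\<^sup>2)
          has_real_derivative D) (at t within {s. 0 \<le> s \<and> ereal s < T}) \<and>
       D \<le> - ?\<delta> * ((norm (x' t))\<^sup>2 + (norm (g (x t + \<beta> *\<^sub>R x' t)))\<^sup>2)"
    unfolding u_def w_def by blast
qed

end
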